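(* Assume (A0), (A1), (A2) below. Then there is a positive constant $M$ such that $n_0^2\,|\Xi^3_i|\le M$ for all $i$ (and all $k$). (A0) For $i=1,\dots,k$, $\mathbf{X}_i=\{X_{i1},\dots,X_{in_i}\}$ is a random sample of size $n_i\ge2m$ from the distribution of a random element $X_i$ of a measurable space $(E,\mathcal{E})$, the samples independent. (A1) There is $M>0$ with $\mathbb{E}\{h^2(X_{i1},\dots,X_{im})\}<M$ for all $i$, $k$. (A2) $n_i=c_in_0$ with $n_0\ge2m$ and $1\le c_i\le C$ for a constant $C>0$.
   Context: $m\ge1$ is fixed and $h:E^m\to\mathbb{R}$ is a symmetric kernel; distributions and sample sizes may depend on $k$. Let $\theta_i=\mathbb{E}\{h(X_{i1},\dots,X_{im})\}$, and for $0\le c\le m$ let $h_{c}(x_1,\dots,x_c)=\mathbb{E}\{h(X_{i1},\dots,X_{im})\mid X_{i1}=x_1,\dots,X_{ic}=x_c\}$ (with $h_0=\theta_i$), $\widetilde{h}_c=h_c-\theta_i$, and $\widetilde{\zeta}^3_{i(c,j)}=\mathrm{Cov}\{\widetilde{h}_c(X_{i1},\dots,X_{ic}),\widetilde{h}_j(X_{i1},\dots,X_{ij})\widetilde{h}_{c-j}(X_{i(j+1)},\dots,X_{ic})\}$. Define $$\Xi^3_i=4\binom{n_i}{2m}^{-1}\binom{2m}{m}^{-1}\sum_{c=1}^m\binom{n_i-m}{2m-c}\binom{m}{c}\sum_{j=1}^c\binom{c}{j}\binom{2m-c}{m-j}\widetilde{\zeta}^3_{i(c,j)},$$ with $\binom{a}{b}=0$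 if $b>a$. *)

theory Defs
  imports "HOL-Probability.Probability" "HOL-Combinatorics.Permutations"
begin

text \<open>All samples are i.i.d. from a distribution P on E; expectations of functions of
  (X_1,...,X_r) are therefore integrals w.r.t. the product measure P^r.
  Coordinates are indexed 0,...,r-1.\<close>

definition sym_kernel :: "'a measure \<Rightarrow> nat \<Rightarrow> ((nat \<Rightarrow> 'a) \<Rightarrow> real) \<Rightarrow> bool" where
  "sym_kernel E m h \<longleftrightarrow>
     h \<in> borel_measurable (PiM {..<m} (\<lambda>_. E)) \<and>
     (\<forall>\<sigma> x. \<sigma> permutes {..<m} \<longrightarrow> x \<in> space (PiM {..<m} (\<lambda>_. E)) \<longrightarrow> h (x \<circ> \<sigma>) = h x)"

definition theta :: "'a measure \<Rightarrow> nat \<Rightarrow> ((nat \<Rightarrow> 'a) \<Rightarrow> real) \<Rightarrow> real" where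
  "theta P m h = (\<integral>y. h y \<partial>(PiM {..<m} (\<lambda>_. P)))"

text \<open>h_c(x_1,...,x_c) = E{h(X_1..X_m) | X_1=x_1..X_c=x_c}
  (the canonical version, integrating out the remaining independent coordinates)\<close>
definition hc :: "'a measure \<Rightarrow> nat \<Rightarrow> ((nat \<Rightarrow> 'a) \<Rightarrow> real) \<Rightarrow> nat \<Rightarrow> (nat \<Rightarrow> 'a) \<Rightarrow> real" where
  "hc P m h c x = (\<integral>y. h (\<lambda>j\<in>{..<m}. if j < c then x j else y j) \<partial>(PiM {c..<m} (\<lambda>_. P)))"

definition htilde :: "'a measure \<Rightarrow> nat \<Rightarrow> ((nat \<Rightarrow> 'a) \<Rightarrow> real) \<Rightarrow> nat \<Rightarrow> (nat \<Rightarrow> 'a) \<Rightarrow> real" where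
  "htilde P m h c x = hc P m h c x - theta P m h"

definition cov :: "'b measure \<Rightarrow> ('b \<Rightarrow> real) \<Rightarrow> ('b \<Rightarrow> real) \<Rightarrow> real" where
  "cov M U V = (\<integral>\<omega>. (U \<omega> - (\<integral>z. U z \<partial>M)) * (V \<omega> - (\<integral>z. V z \<partial>M)) \<partial>M)"

definition zeta3 :: "'a measure \<Rightarrow> nat \<Rightarrow> ((nat \<Rightarrow> 'a) \<Rightarrow> real) \<Rightarrow> nat \<Rightarrow> nat \<Rightarrow> real" where
  "zeta3 P m h c j = cov (PiM {..<c} (\<lambda>_. P))
      (\<lambda>x. htilde P m h c x)
      (\<lambda>x. htilde P m h j x * htilde P m h (c - j) (\<lambda>l. x (l + j)))"

definition Xi3 :: "'a measure \<Rightarrow> nat \<Rightarrow> ((nat \<Rightarrow> 'a) \<Rightarrow> real) \<Rightarrow> nat \<Rightarrow> real" where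
  "Xi3 P m h n = 4 / (real (n choose (2*m)) * real ((2*m) choose m)) *
     (\<Sum>c=1..m. real ((n - m) choose (2*m - c)) * real (m choose c) *
        (\<Sum>j=1..c. real (c choose j) * real ((2*m - c) choose (m - j)) * zeta3 P m h c j))"

end

theory Submission
  imports Defs
begin

text \<open>Since \<open>htilde Q m h 0 = 0\<close>, the covariance \<open>zeta3 Q m h 1 1\<close> vanishes and the summand
  \<open>c = 1\<close> of \<open>Xi3\<close> drops out. For \<open>c \<ge> 2\<close> the weight \<open>C(n - m, 2m - c) / C(n, 2m)\<close> is at
  most \<open>(2m)\<^sup>2\<^sup>m / n\<^sup>2 \<le> (2m)\<^sup>2\<^sup>m / n\<^sub>0\<^sup>2\<close>, and by Vandermonde's identity the inner binomial
  weights sum to at most \<open>C(2m, m)\<close>. It remains to bound every \<open>zeta3\<close> by the second moment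
  of \<open>h\<close> alone: conditional expectations contract second moments, and \<open>htilde j\<close> and the
  shifted \<open>htilde (c - j)\<close> depend on disjoint blocks of independent coordinates, so the second
  moment of their product is the product of their second moments.\<close>

lemma prob_space_PiM_const: "prob_space Q \<Longrightarrow> prob_space (PiM I (\<lambda>_. Q))"
  by (rule prob_space_PiM) auto

lemma borel_measurable_ennreal_square:
  fixes f :: "'b \<Rightarrow> real"
  assumes "f \<in> borel_measurable M"
  shows "(\<lambda>x. ennreal ((f x)\<^sup>2)) \<in> borel_measurable M"
  using assms by measurable

lemma square_integral_le_nn_integral_square:
  fixes f :: "'b \<Rightarrow> real"
  assumes "prob_space M"
  shows "ennreal ((\<integral>x. f x \<partial>M)\<^sup>2) \<le> (\<integral>\<^sup>+x. ennreal ((f x)\<^sup>2) \<partial>M)"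
proof (cases "integrable M f")
  case False
  then show ?thesis by (simp add: not_integrable_integral_eq)
next
  case True
  interpret prob_space M by fact
  have [measurable]: "f \<in> borel_measurable M" using True by auto
  show ?thesis
  proof (cases "(\<integral>\<^sup>+x. ennreal ((f x)\<^sup>2) \<partial>M) < \<infinity>")
    case False
    then show ?thesis using top.not_eq_extremum by fastforce
  next
    case True
    have sq: "integrable M (\<lambda>x. (f x)\<^sup>2)"
      by (rule integrableI_bounded) (use True in auto)
    have "(expectation f)\<^sup>2 \<le> expectation (\<lambda>x. (f x)\<^sup>2)"
      using variance_positive[of f] variance_eq[OF \<open>integrable M f\<close> sq] by simp
    then have "ennreal ((expectation f)\<^sup>2) \<le> ennreal (expectation (\<lambda>x. (f x)\<^sup>2))"
      by (rule ennreal_leI)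
    also have "\<dots> = (\<integral>\<^sup>+x. ennreal ((f x)\<^sup>2) \<partial>M)"
      by (rule nn_integral_eq_integral[symmetric]) (use sq in auto)
    finally show ?thesis .
  qed
qed

lemma square_integral_le_of_nn_integral_square_le:
  fixes f :: "'b \<Rightarrow> real"
  assumes "prob_space M" and "(\<integral>\<^sup>+x. ennreal ((f x)\<^sup>2) \<partial>M) \<le> ennreal A" and "0 \<le> A"
  shows "(\<integral>x. f x \<partial>M)\<^sup>2 \<le> A"
  using order_trans[OF square_integral_le_nn_integral_square[OF assms(1)] assms(2)] assms(3)
  by (simp add: ennreal_le_iff)

lemma nn_integral_square_diff_const_le:
  fixes f :: "'b \<Rightarrow> real"
  assumes M: "prob_space M" and f: "f \<in> borel_measurable M"
    and fA: "(\<integral>\<^sup>+x. ennreal ((f x)\<^sup>2) \<partial>M) \<le> ennreal A" and A: "0 \<le> A" and aB: "a\<^sup>2 \<le> B"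
  shows "(\<integral>\<^sup>+x. ennreal ((f x - a)\<^sup>2) \<partial>M) \<le> ennreal (2 * A + 2 * B)"
proof -
  interpret prob_space M by fact
  have B: "0 \<le> B" using aB by (meson order_trans zero_le_power2)
  have "(\<integral>\<^sup>+x. ennreal ((f x - a)\<^sup>2) \<partial>M) \<le> (\<integral>\<^sup>+x. 2 * ennreal ((f x)\<^sup>2) + ennreal (2 * a\<^sup>2) \<partial>M)"
  proof (intro nn_integral_mono)
    fix x
    have "(f x - a)\<^sup>2 \<le> 2 * (f x)\<^sup>2 + 2 * a\<^sup>2"
      using zero_le_power2[of "f x + a"] unfolding power2_diff power2_sum by linarith
    then have "ennreal ((f x - a)\<^sup>2) \<le> ennreal (2 * (f x)\<^sup>2 + 2 * a\<^sup>2)"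
      by (rule ennreal_leI)
    also have "\<dots> = 2 * ennreal ((f x)\<^sup>2) + ennreal (2 * a\<^sup>2)"
      by (simp add: ennreal_plus[symmetric] ennreal_mult)
    finally show "ennreal ((f x - a)\<^sup>2) \<le> 2 * ennreal ((f x)\<^sup>2) + ennreal (2 * a\<^sup>2)" .
  qed
  also have "\<dots> = 2 * (\<integral>\<^sup>+x. ennreal ((f x)\<^sup>2) \<partial>M) + ennreal (2 * a\<^sup>2)"
    using f by (simp add: nn_integral_add nn_integral_cmult emeasure_space_1)
  also have "\<dots> \<le> 2 * ennreal A + ennreal (2 * B)"
    using fA aB by (intro add_mono mult_left_mono ennreal_leI) auto
  also have "\<dots> = ennreal (2 * A + 2 * B)"
    using A B by (simp add: ennreal_plus[symmetric] ennreal_mult)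
  finally show ?thesis .
qed

lemma abs_integral_mult_le:
  fixes f g :: "'b \<Rightarrow> real"
  assumes f: "f \<in> borel_measurable M" and g: "g \<in> borel_measurable M"
    and fA: "(\<integral>\<^sup>+x. ennreal ((f x)\<^sup>2) \<partial>M) \<le> ennreal A"
    and gB: "(\<integral>\<^sup>+x. ennreal ((g x)\<^sup>2) \<partial>M) \<le> ennreal B"
    and A: "0 \<le> A" and B: "0 \<le> B"
  shows "\<bar>\<integral>x. f x * g x \<partial>M\<bar> \<le> (A + B) / 2"
proof (cases "integrable M (\<lambda>x. f x * g x)")
  case False
  then show ?thesis using A B by (simp add: not_integrable_integral_eq)
next
  case True
  have "ennreal (2 * \<bar>\<integral>x. f x * g x \<partial>M\<bar>) = 2 * ennreal (norm (\<integral>x. f x * g x \<partial>M))"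
    by (simp add: ennreal_mult)
  also have "\<dots> \<le> 2 * (\<integral>\<^sup>+x. norm (f x * g x) \<partial>M)"
    by (intro mult_left_mono integral_norm_bound_ennreal True) auto
  also have "\<dots> = (\<integral>\<^sup>+x. 2 * ennreal (norm (f x * g x)) \<partial>M)"
    by (rule nn_integral_cmult[symmetric]) (use f g in measurable)
  also have "\<dots> \<le> (\<integral>\<^sup>+x. ennreal ((f x)\<^sup>2) + ennreal ((g x)\<^sup>2) \<partial>M)"
  proof (intro nn_integral_mono)
    fix x
    have "2 * \<bar>f x * g x\<bar> \<le> (f x)\<^sup>2 + (g x)\<^sup>2"
      using zero_le_power2[of "\<bar>f x\<bar> - \<bar>g x\<bar>"] unfolding power2_diff abs_mult by simp
    then have "ennreal (2 * \<bar>f x * g x\<bar>) \<le> ennreal ((f x)\<^sup>2 + (g x)\<^sup>2)"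
      by (rule ennreal_leI)
    then show "2 * ennreal (norm (f x * g x)) \<le> ennreal ((f x)\<^sup>2) + ennreal ((g x)\<^sup>2)"
      by (simp add: ennreal_mult ennreal_plus)
  qed
  also have "\<dots> = (\<integral>\<^sup>+x. ennreal ((f x)\<^sup>2) \<partial>M) + (\<integral>\<^sup>+x. ennreal ((g x)\<^sup>2) \<partial>M)"
    using f g by (simp add: nn_integral_add)
  also have "\<dots> \<le> ennreal A + ennreal B"
    using fA gB by (rule add_mono)
  also have "\<dots> = ennreal (A + B)"
    using A B by (rule ennreal_plus[symmetric])
  finally have "2 * \<bar>\<integral>x. f x * g x \<partial>M\<bar> \<le> A + B"
    using A B by (subst (asm) ennreal_le_iff) auto
  then show ?thesis by simp
qed

lemma abs_cov_le:
  fixes U V :: "'b \<Rightarrow> real"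
  assumes M: "prob_space M" and U: "U \<in> borel_measurable M" and V: "V \<in> borel_measurable M"
    and UA: "(\<integral>\<^sup>+x. ennreal ((U x)\<^sup>2) \<partial>M) \<le> ennreal A"
    and VB: "(\<integral>\<^sup>+x. ennreal ((V x)\<^sup>2) \<partial>M) \<le> ennreal B"
    and A: "0 \<le> A" and B: "0 \<le> B"
  shows "\<bar>cov M U V\<bar> \<le> 2 * A + 2 * B"
proof -
  have "(\<integral>\<^sup>+x. ennreal ((U x - (\<integral>z. U z \<partial>M))\<^sup>2) \<partial>M) \<le> ennreal (2 * A + 2 * A)"
    by (rule nn_integral_square_diff_const_le[OF M U UA A
          square_integral_le_of_nn_integral_square_le[OF M UA A]])
  moreover have "(\<integral>\<^sup>+x. ennreal ((V x - (\<integral>z. V z \<partial>M))\<^sup>2) \<partial>M) \<le> ennreal (2 * B + 2 * B)"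
    by (rule nn_integral_square_diff_const_le[OF M V VB B
          square_integral_le_of_nn_integral_square_le[OF M VB B]])
  ultimately have "\<bar>cov M U V\<bar> \<le> ((2 * A + 2 * A) + (2 * B + 2 * B)) / 2"
    unfolding cov_def using U V A B by (intro abs_integral_mult_le) auto
  then show ?thesis by simp
qed

lemma measurable_PiM_shift:
  fixes j c :: nat
  shows "(\<lambda>w l. w (l + j)) \<in> measurable (PiM {..<c} (\<lambda>_. Q)) (PiM {..<c - j} (\<lambda>_. Q))"
proof (rule measurable_PiM_single'[where f = "\<lambda>l w. w (l + j)"])
  show "(\<lambda>w. w (l + j)) \<in> measurable (PiM {..<c} (\<lambda>_. Q)) Q" if "l \<in> {..<c - j}" for l
    using that by (intro measurable_component_singleton) auto
qed (auto simp: space_PiM PiE_def extensional_def Pi_def)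

lemma measurable_PiM_prefix:
  fixes j c :: nat
  assumes F: "F \<in> borel_measurable (PiM {..<j} (\<lambda>_. Q))" and "j \<le> c"
    and local: "\<And>x x'. (\<And>l. l < j \<Longrightarrow> x l = x' l) \<Longrightarrow> F x = F x'"
  shows "F \<in> borel_measurable (PiM {..<c} (\<lambda>_. Q))"
proof -
  have "F = (\<lambda>w. F (restrict w {..<j}))"
    by (rule ext, rule local) simp
  also have "\<dots> \<in> borel_measurable (PiM {..<c} (\<lambda>_. Q))"
    by (rule measurable_compose[OF measurable_restrict_subset F]) (use \<open>j \<le> c\<close> in auto)
  finally show ?thesis .
qed

lemma nn_integral_PiM_split:
  fixes j c :: nat
  assumes "sigma_finite_measure Q" and "j \<le> c"
    and f: "f \<in> borel_measurable (PiM {..<c} (\<lambda>_. Q))"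
  shows "(\<integral>\<^sup>+x. f x \<partial>PiM {..<c} (\<lambda>_. Q))
       = (\<integral>\<^sup>+x. \<integral>\<^sup>+y. f (merge {..<j} {j..<c} (x, y)) \<partial>PiM {j..<c} (\<lambda>_. Q) \<partial>PiM {..<j} (\<lambda>_. Q))"
proof -
  interpret product_sigma_finite "\<lambda>_::nat. Q"
    by (rule product_sigma_finite.intro) fact
  have "{..<j} \<union> {j..<c} = {..<c}"
    using ivl_disj_un_one(2)[OF \<open>j \<le> c\<close>] .
  then show ?thesis
    using product_nn_integral_fold[of "{..<j}" "{j..<c}" f] f by (simp add: Int_def)
qed

lemma nn_integral_PiM_shift:
  fixes j c :: nat
  assumes Q: "prob_space Q" and g: "g \<in> borel_measurable (PiM {..<c - j} (\<lambda>_. Q))"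
  shows "(\<integral>\<^sup>+y. g (\<lambda>l\<in>{..<c - j}. y (l + j)) \<partial>PiM {j..<c} (\<lambda>_. Q))
       = (\<integral>\<^sup>+x. g x \<partial>PiM {..<c - j} (\<lambda>_. Q))"
proof -
  let ?R = "\<lambda>y. \<lambda>l\<in>{..<c - j}. y (l + j)"
  have R: "?R \<in> measurable (PiM {j..<c} (\<lambda>_. Q)) (PiM {..<c - j} (\<lambda>_. Q))"
    by (intro measurable_restrict measurable_component_singleton) auto
  have "(\<lambda>l. l + j) \<in> {..<c - j} \<rightarrow> {j..<c}"
    by auto
  then have distr_R: "distr (PiM {j..<c} (\<lambda>_. Q)) (PiM {..<c - j} (\<lambda>_. Q)) ?R = PiM {..<c - j} (\<lambda>_. Q)"
    using distr_PiM_reindex[of "{j..<c}" "\<lambda>_. Q" "\<lambda>l. l + j" "{..<c - j}"] Q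
    by (auto simp: inj_on_def)
  have "(\<integral>\<^sup>+y. g (?R y) \<partial>PiM {j..<c} (\<lambda>_. Q))
      = (\<integral>\<^sup>+x. g x \<partial>distr (PiM {j..<c} (\<lambda>_. Q)) (PiM {..<c - j} (\<lambda>_. Q)) ?R)"
    by (rule nn_integral_distr[OF R, symmetric]) (use g in simp)
  also have "\<dots> = (\<integral>\<^sup>+x. g x \<partial>PiM {..<c - j} (\<lambda>_. Q))"
    by (simp only: distr_R)
  finally show ?thesis .
qed

lemma nn_integral_PiM_square_mult_shift:
  fixes F G :: "(nat \<Rightarrow> 'a) \<Rightarrow> real"
  assumes Q: "prob_space Q" and jc: "j \<le> c"
    and F: "F \<in> borel_measurable (PiM {..<j} (\<lambda>_. Q))"
    and G: "G \<in> borel_measurable (PiM {..<c - j} (\<lambda>_. Q))"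
    and local: "\<And>x x'. (\<And>l. l < j \<Longrightarrow> x l = x' l) \<Longrightarrow> F x = F x'"
  shows "(\<integral>\<^sup>+x. ennreal ((F x * G (\<lambda>l. x (l + j)))\<^sup>2) \<partial>PiM {..<c} (\<lambda>_. Q))
       = (\<integral>\<^sup>+x. ennreal ((F x)\<^sup>2) \<partial>PiM {..<j} (\<lambda>_. Q))
         * (\<integral>\<^sup>+x. ennreal ((G x)\<^sup>2) \<partial>PiM {..<c - j} (\<lambda>_. Q))"
proof -
  let ?T = "merge {..<j} {j..<c}"
  let ?R = "\<lambda>y. \<lambda>l\<in>{..<c - j}. y (l + j)"
  let ?\<mu> = "PiM {..<j} (\<lambda>_. Q)" and ?\<nu> = "PiM {j..<c} (\<lambda>_. Q)"
  have F_T: "F (?T (x, y)) = F x" for x y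
    by (rule local) (simp add: merge_def)
  have shift_T: "(\<lambda>l. ?T (x, y) (l + j)) = ?R y" for x y :: "nat \<Rightarrow> 'a"
    using jc by (auto simp: merge_def fun_eq_iff)
  have FG: "(\<lambda>w. ennreal ((F w * G (\<lambda>l. w (l + j)))\<^sup>2)) \<in> borel_measurable (PiM {..<c} (\<lambda>_. Q))"
    by (intro borel_measurable_ennreal_square borel_measurable_times measurable_PiM_prefix[OF F jc local]
          measurable_compose[OF measurable_PiM_shift G])
  have GR: "(\<lambda>y. ennreal ((G (?R y))\<^sup>2)) \<in> borel_measurable ?\<nu>"
    by (intro borel_measurable_ennreal_square measurable_compose[OF _ G]
          measurable_restrict measurable_component_singleton) auto
  have "(\<integral>\<^sup>+x. ennreal ((F x * G (\<lambda>l. x (l + j)))\<^sup>2) \<partial>PiM {..<c} (\<lambda>_. Q))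
      = (\<integral>\<^sup>+x. \<integral>\<^sup>+y. ennreal ((F (?T (x, y)) * G (\<lambda>l. ?T (x, y) (l + j)))\<^sup>2) \<partial>?\<nu> \<partial>?\<mu>)"
    by (rule nn_integral_PiM_split[OF prob_space_imp_sigma_finite[OF Q] jc FG])
  also have "\<dots> = (\<integral>\<^sup>+x. ennreal ((F x)\<^sup>2) * (\<integral>\<^sup>+y. ennreal ((G (?R y))\<^sup>2) \<partial>?\<nu>) \<partial>?\<mu>)"
    by (simp only: F_T shift_T power_mult_distrib ennreal_mult zero_le_power2 nn_integral_cmult[OF GR])
  also have "\<dots> = (\<integral>\<^sup>+x. ennreal ((F x)\<^sup>2) \<partial>?\<mu>) * (\<integral>\<^sup>+y. ennreal ((G (?R y))\<^sup>2) \<partial>?\<nu>)"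
    by (rule nn_integral_multc[OF borel_measurable_ennreal_square[OF F]])
  also have "(\<integral>\<^sup>+y. ennreal ((G (?R y))\<^sup>2) \<partial>?\<nu>) = (\<integral>\<^sup>+x. ennreal ((G x)\<^sup>2) \<partial>PiM {..<c - j} (\<lambda>_. Q))"
    by (rule nn_integral_PiM_shift[OF Q borel_measurable_ennreal_square[OF G]])
  finally show ?thesis .
qed

lemma restrict_if_eq_merge:
  fixes c m :: nat
  shows "c \<le> m \<Longrightarrow> (\<lambda>j\<in>{..<m}. if j < c then x j else y j) = merge {..<c} {c..<m} (x, y)"
  by (auto simp: merge_def restrict_def fun_eq_iff not_less dest: order.strict_trans2)

lemma hc_eq_integral_merge:
  "c \<le> m \<Longrightarrow> hc Q m h c x = (\<integral>y. h (merge {..<c} {c..<m} (x, y)) \<partial>PiM {c..<m} (\<lambda>_. Q))"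
  unfolding hc_def by (simp add: restrict_if_eq_merge)

lemma hc_cong:
  assumes "\<And>l. l < c \<Longrightarrow> x l = x' l"
  shows "hc Q m h c x = hc Q m h c x'"
proof -
  have "(\<lambda>y. h (\<lambda>j\<in>{..<m}. if j < c then x j else y j))
      = (\<lambda>y. h (\<lambda>j\<in>{..<m}. if j < c then x' j else y j))"
    using assms by (intro ext arg_cong[where f = h] restrict_ext) auto
  then show ?thesis unfolding hc_def by simp
qed

lemma htilde_cong:
  assumes "\<And>l. l < c \<Longrightarrow> x l = x' l"
  shows "htilde Q m h c x = htilde Q m h c x'"
  using hc_cong[OF assms] unfolding htilde_def by simp

lemma htilde_0: "htilde Q m h 0 x = 0"
proof -
  have "hc Q m h 0 x = theta Q m h"
    unfolding hc_def theta_def atLeast0LessThan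
    by (intro Bochner_Integration.integral_cong refl arg_cong[where f = h])
       (auto simp: space_PiM PiE_restrict)
  then show ?thesis unfolding htilde_def by simp
qed

lemma zeta3_1_1: "zeta3 Q m h 1 1 = 0"
  unfolding zeta3_def cov_def by (simp add: htilde_0)

lemma borel_measurable_hc:
  fixes c m :: nat
  assumes Q: "sigma_finite_measure Q" and h: "h \<in> borel_measurable (PiM {..<m} (\<lambda>_. Q))"
    and cm: "c \<le> m"
  shows "hc Q m h c \<in> borel_measurable (PiM {..<c} (\<lambda>_. Q))"
proof -
  interpret N: sigma_finite_measure "PiM {c..<m} (\<lambda>_. Q)"
    using Q by (intro product_sigma_finite.sigma_finite product_sigma_finite.intro) auto
  have "merge {..<c} {c..<m}
          \<in> measurable (PiM {..<c} (\<lambda>_. Q) \<Otimes>\<^sub>M PiM {c..<m} (\<lambda>_. Q)) (PiM {..<m} (\<lambda>_. Q))"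
    using measurable_merge[of "{..<c}" "{c..<m}" "\<lambda>_. Q"] ivl_disj_un_one(2)[OF cm] by simp
  from measurable_compose[OF this h] show ?thesis
    unfolding hc_eq_integral_merge[OF cm, abs_def]
    by (intro N.borel_measurable_lebesgue_integral) (simp add: case_prod_beta')
qed

lemma nn_integral_square_hc_le:
  assumes Q: "prob_space Q" and h: "h \<in> borel_measurable (PiM {..<m} (\<lambda>_. Q))" and cm: "c \<le> m"
  shows "(\<integral>\<^sup>+x. ennreal ((hc Q m h c x)\<^sup>2) \<partial>PiM {..<c} (\<lambda>_. Q))
           \<le> (\<integral>\<^sup>+x. ennreal ((h x)\<^sup>2) \<partial>PiM {..<m} (\<lambda>_. Q))"
proof -
  have "(\<integral>\<^sup>+x. ennreal ((hc Q m h c x)\<^sup>2) \<partial>PiM {..<c} (\<lambda>_. Q))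
      \<le> (\<integral>\<^sup>+x. \<integral>\<^sup>+y. ennreal ((h (merge {..<c} {c..<m} (x, y)))\<^sup>2) \<partial>PiM {c..<m} (\<lambda>_. Q)
            \<partial>PiM {..<c} (\<lambda>_. Q))"
    unfolding hc_eq_integral_merge[OF cm]
    by (intro nn_integral_mono square_integral_le_nn_integral_square prob_space_PiM_const Q)
  also have "\<dots> = (\<integral>\<^sup>+x. ennreal ((h x)\<^sup>2) \<partial>PiM {..<m} (\<lambda>_. Q))"
    by (rule nn_integral_PiM_split[OF prob_space_imp_sigma_finite[OF Q] cm
          borel_measurable_ennreal_square[OF h], symmetric])
  finally show ?thesis .
qed

lemma borel_measurable_htilde:
  assumes "sigma_finite_measure Q" and "h \<in> borel_measurable (PiM {..<m} (\<lambda>_. Q))" and "c \<le> m"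
  shows "htilde Q m h c \<in> borel_measurable (PiM {..<c} (\<lambda>_. Q))"
  unfolding htilde_def[abs_def]
  by (rule borel_measurable_diff[OF borel_measurable_hc[OF assms] borel_measurable_const])

lemma nn_integral_square_htilde_le:
  assumes Q: "prob_space Q" and h: "h \<in> borel_measurable (PiM {..<m} (\<lambda>_. Q))"
    and hM: "(\<integral>\<^sup>+x. ennreal ((h x)\<^sup>2) \<partial>PiM {..<m} (\<lambda>_. Q)) \<le> ennreal M" and M: "0 \<le> M"
    and cm: "c \<le> m"
  shows "(\<integral>\<^sup>+x. ennreal ((htilde Q m h c x)\<^sup>2) \<partial>PiM {..<c} (\<lambda>_. Q)) \<le> ennreal (4 * M)"
proof -
  have "(theta Q m h)\<^sup>2 \<le> M"
    unfolding theta_def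
    by (rule square_integral_le_of_nn_integral_square_le[OF prob_space_PiM_const[OF Q] hM M])
  then have "(\<integral>\<^sup>+x. ennreal ((hc Q m h c x - theta Q m h)\<^sup>2) \<partial>PiM {..<c} (\<lambda>_. Q))
      \<le> ennreal (2 * M + 2 * M)"
    by (intro nn_integral_square_diff_const_le[OF prob_space_PiM_const[OF Q]
          borel_measurable_hc[OF prob_space_imp_sigma_finite[OF Q] h cm]
          order_trans[OF nn_integral_square_hc_le[OF Q h cm] hM] M])
  then show ?thesis unfolding htilde_def by simp
qed

lemma abs_zeta3_le:
  assumes Q: "prob_space Q" and h: "h \<in> borel_measurable (PiM {..<m} (\<lambda>_. Q))"
    and hM: "(\<integral>\<^sup>+x. ennreal ((h x)\<^sup>2) \<partial>PiM {..<m} (\<lambda>_. Q)) \<le> ennreal M" and M: "0 \<le> M"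
    and jc: "j \<le> c" and cm: "c \<le> m"
  shows "\<bar>zeta3 Q m h c j\<bar> \<le> 2 * (4 * M) + 2 * (4 * M)\<^sup>2"
proof -
  note htilde_measurable = borel_measurable_htilde[OF prob_space_imp_sigma_finite[OF Q] h]
  note htilde_square = nn_integral_square_htilde_le[OF Q h hM M]
  have jm: "j \<le> m" and cjm: "c - j \<le> m" using jc cm by auto
  have local: "htilde Q m h j x = htilde Q m h j x'" if "\<And>l. l < j \<Longrightarrow> x l = x' l" for x x'
    using htilde_cong that by blast
  let ?V = "\<lambda>x. htilde Q m h j x * htilde Q m h (c - j) (\<lambda>l. x (l + j))"
  have V: "?V \<in> borel_measurable (PiM {..<c} (\<lambda>_. Q))"
    by (intro borel_measurable_times measurable_PiM_prefix[OF htilde_measurable[OF jm] jc local]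
          measurable_compose[OF measurable_PiM_shift htilde_measurable[OF cjm]])
  have "(\<integral>\<^sup>+x. ennreal ((?V x)\<^sup>2) \<partial>PiM {..<c} (\<lambda>_. Q))
      = (\<integral>\<^sup>+x. ennreal ((htilde Q m h j x)\<^sup>2) \<partial>PiM {..<j} (\<lambda>_. Q))
        * (\<integral>\<^sup>+x. ennreal ((htilde Q m h (c - j) x)\<^sup>2) \<partial>PiM {..<c - j} (\<lambda>_. Q))"
    by (rule nn_integral_PiM_square_mult_shift[OF Q jc htilde_measurable[OF jm]
          htilde_measurable[OF cjm] local])
  also have "\<dots> \<le> ennreal (4 * M) * ennreal (4 * M)"
    by (rule mult_mono[OF htilde_square[OF jm] htilde_square[OF cjm]]) auto
  also have "\<dots> = ennreal ((4 * M)\<^sup>2)"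
    using M by (simp add: ennreal_mult[symmetric] power2_eq_square)
  finally have "\<bar>cov (PiM {..<c} (\<lambda>_. Q)) (htilde Q m h c) ?V\<bar> \<le> 2 * (4 * M) + 2 * (4 * M)\<^sup>2"
    using M by (intro abs_cov_le[OF prob_space_PiM_const[OF Q] htilde_measurable[OF cm] V
          htilde_square[OF cm]]) auto
  then show ?thesis unfolding zeta3_def .
qed

lemma square_mult_binomial_le:
  fixes n n0 m c :: nat
  assumes c: "2 \<le> c" "c \<le> m" and n: "2 * m \<le> n" and n0: "n0 \<le> n"
  shows "(real n0)\<^sup>2 * real ((n - m) choose (2 * m - c))
           \<le> (2 * real m) ^ (2 * m) * real (n choose (2 * m))"
proof -
  have "1 \<le> real n" using c n by simp
  have "real ((n - m) choose (2 * m - c)) \<le> real (n choose (2 * m - c))"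
    by (simp add: binomial_right_mono)
  also have "\<dots> \<le> real n ^ (2 * m - c)"
    using n by (simp add: binomial_le_pow)
  also have "\<dots> \<le> real n ^ (2 * m - 2)"
    using \<open>1 \<le> real n\<close> c by (intro power_increasing) auto
  finally have "(real n0)\<^sup>2 * real ((n - m) choose (2 * m - c)) \<le> (real n)\<^sup>2 * real n ^ (2 * m - 2)"
    using n0 by (intro mult_mono power_mono) auto
  also have "\<dots> = real n ^ (2 + (2 * m - 2))"
    by (rule power_add[symmetric])
  also have "\<dots> = real n ^ (2 * m)"
    using c by (simp only: le_add_diff_inverse mult_le_mono2 mult_2_right le_add1 order.trans)
  also have "\<dots> = (2 * real m) ^ (2 * m) * (real n / real (2 * m)) ^ (2 * m)"
    using c by (simp add: power_divide)
  also have "\<dots> \<le> (2 * real m) ^ (2 * m) * real (n choose (2 * m))"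
    using n by (intro mult_left_mono binomial_ge_n_over_k_pow_k) auto
  finally show ?thesis .
qed

lemma sum_binomial_mult_le_central_binomial:
  fixes c m :: nat
  assumes "c \<le> m"
  shows "(\<Sum>j=1..c. (c choose j) * ((2 * m - c) choose (m - j))) \<le> (2 * m) choose m"
proof -
  have "(\<Sum>j=1..c. (c choose j) * ((2 * m - c) choose (m - j)))
      \<le> (\<Sum>j\<le>m. (c choose j) * ((2 * m - c) choose (m - j)))"
    using assms by (intro sum_mono2) auto
  also have "\<dots> = (2 * m) choose m"
    using vandermonde[where r = m and m = c and n = "2 * m - c"] assms by simp
  finally show ?thesis .
qed

lemma abs_sum_binomial_mult_le:
  fixes c m :: nat and z :: "nat \<Rightarrow> real"
  assumes cm: "c \<le> m" and z: "\<And>j. j \<le> c \<Longrightarrow> \<bar>z j\<bar> \<le> Z"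
  shows "\<bar>\<Sum>j=1..c. real (c choose j) * real ((2 * m - c) choose (m - j)) * z j\<bar>
           \<le> real ((2 * m) choose m) * Z"
proof -
  have Z: "0 \<le> Z" using z[of 0] by linarith
  have "\<bar>\<Sum>j=1..c. real (c choose j) * real ((2 * m - c) choose (m - j)) * z j\<bar>
      \<le> (\<Sum>j=1..c. real (c choose j) * real ((2 * m - c) choose (m - j)) * Z)"
    using z by (intro order_trans[OF sum_abs] sum_mono) (auto simp: abs_mult intro!: mult_left_mono)
  also have "\<dots> = real (\<Sum>j=1..c. (c choose j) * ((2 * m - c) choose (m - j))) * Z"
    by (simp add: sum_distrib_right)
  also have "\<dots> \<le> real ((2 * m) choose m) * Z"
    using sum_binomial_mult_le_central_binomial[OF cm] Z
    by (intro mult_right_mono) (simp_all only: of_nat_le_iff)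
  finally show ?thesis .
qed

lemma abs_Xi3_summand_le:
  fixes n n0 m c :: nat
  assumes c: "c \<in> {1..m}" and n: "2 * m \<le> n" and n0: "n0 \<le> n"
    and zeta: "\<And>j. j \<le> c \<Longrightarrow> \<bar>zeta3 Q m h c j\<bar> \<le> Z"
  shows "(real n0)\<^sup>2 * \<bar>real ((n - m) choose (2 * m - c)) * real (m choose c) *
           (\<Sum>j=1..c. real (c choose j) * real ((2 * m - c) choose (m - j)) * zeta3 Q m h c j)\<bar>
         \<le> real (n choose (2 * m)) * real ((2 * m) choose m) * ((2 * real m) ^ (2 * m) * real (m choose c) * Z)"
  (is "_ * \<bar>?w * ?b * ?S\<bar> \<le> ?Cn * ?Cb * (?K * ?b * Z)")
proof (cases "c = 1")
  case True
  have "?S = 0" unfolding True using zeta3_1_1[of Q m h] by simp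
  moreover have "0 \<le> Z" using zeta[of 0] by linarith
  ultimately show ?thesis by simp
next
  case False
  with c have c2: "2 \<le> c" and cm: "c \<le> m" by auto
  have "(real n0)\<^sup>2 * ?w * (?b * \<bar>?S\<bar>) \<le> ?K * ?Cn * (?b * (?Cb * Z))"
    by (intro mult_mono square_mult_binomial_le[OF c2 cm n n0] mult_left_mono
          abs_sum_binomial_mult_le[OF cm zeta]) auto
  then show ?thesis by (simp add: abs_mult algebra_simps)
qed

lemma abs_Xi3_le:
  fixes n n0 m :: nat
  assumes n: "2 * m \<le> n" and n0: "n0 \<le> n"
    and zeta: "\<And>c j. j \<le> c \<Longrightarrow> c \<le> m \<Longrightarrow> \<bar>zeta3 Q m h c j\<bar> \<le> Z"
  shows "(real n0)\<^sup>2 * \<bar>Xi3 Q m h n\<bar> \<le> 2 ^ (m + 2) * (2 * real m) ^ (2 * m) * Z"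
proof -
  define K where "K = (2 * real m) ^ (2 * m)"
  define Cn where "Cn = real (n choose (2 * m))"
  define Cb where "Cb = real ((2 * m) choose m)"
  define t where "t c = real ((n - m) choose (2 * m - c)) * real (m choose c) *
    (\<Sum>j=1..c. real (c choose j) * real ((2 * m - c) choose (m - j)) * zeta3 Q m h c j)" for c
  have Z: "0 \<le> Z" using zeta[of 0 0] by linarith
  have K: "0 \<le> K" unfolding K_def by simp
  have Cn: "0 < Cn" unfolding Cn_def using n by simp
  have Cb: "0 < Cb" unfolding Cb_def by simp
  have "(real n0)\<^sup>2 * \<bar>Xi3 Q m h n\<bar> = 4 / (Cn * Cb) * ((real n0)\<^sup>2 * \<bar>\<Sum>c=1..m. t c\<bar>)"
    using Cn Cb unfolding Xi3_def t_def Cn_def Cb_def by (simp add: abs_mult)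
  also have "\<dots> \<le> 4 / (Cn * Cb) * (\<Sum>c=1..m. (real n0)\<^sup>2 * \<bar>t c\<bar>)"
    using Cn Cb unfolding sum_distrib_left[symmetric] by (intro mult_left_mono sum_abs) auto
  also have "\<dots> \<le> 4 / (Cn * Cb) * (\<Sum>c=1..m. Cn * Cb * (K * real (m choose c) * Z))"
    unfolding t_def Cn_def Cb_def K_def using Cn Cb zeta
    by (intro mult_left_mono sum_mono abs_Xi3_summand_le[OF _ n n0]) auto
  also have "\<dots> = 4 * K * Z * real (\<Sum>c=1..m. m choose c)"
    using Cn Cb by (simp add: sum_distrib_left sum_distrib_right algebra_simps)
  also have "\<dots> \<le> 4 * K * Z * 2 ^ m"
  proof -
    have "(\<Sum>c=1..m. m choose c) \<le> (\<Sum>c\<le>m. m choose c)"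
      by (intro sum_mono2) auto
    then have "real (\<Sum>c=1..m. m choose c) \<le> real (2 ^ m)"
      unfolding choose_row_sum of_nat_le_iff .
    then show ?thesis using K Z by (intro mult_left_mono) auto
  qed
  finally show ?thesis unfolding K_def by (simp add: algebra_simps power_add)
qed

lemma sym_kernel_borel_measurable:
  assumes "sym_kernel E m h" and "sets Q = sets E"
  shows "h \<in> borel_measurable (PiM {..<m} (\<lambda>_. Q))"
proof -
  have sets_eq: "sets (PiM {..<m} (\<lambda>_. Q)) = sets (PiM {..<m} (\<lambda>_. E))"
    using assms(2) by (intro sets_PiM_cong) auto
  have "h \<in> borel_measurable (PiM {..<m} (\<lambda>_. E))"
    using assms(1) unfolding sym_kernel_def by blast
  then show ?thesis
    by (subst measurable_cong_sets[OF sets_eq refl])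
qed

theorem lemma8:
  fixes E :: "'a measure" and m :: nat and h :: "(nat \<Rightarrow> 'a) \<Rightarrow> real"
    and P :: "nat \<Rightarrow> nat \<Rightarrow> 'a measure"  \<comment> \<open>P k i: distribution of X_i in problem k\<close>
    and n :: "nat \<Rightarrow> nat \<Rightarrow> nat"  \<comment> \<open>n k i: sample size n_i in problem k\<close>
    and n0 :: "nat \<Rightarrow> nat"
  assumes m: "m \<ge> 1"
    and kernel: "sym_kernel E m h"
    and A0: "\<And>k i. i \<in> {1..k} \<Longrightarrow>
               prob_space (P k i) \<and> sets (P k i) = sets E \<and> n k i \<ge> 2 * m"
    and A1: "\<exists>M>0. \<forall>k. \<forall>i\<in>{1..k}.
               (\<integral>\<^sup>+ x. ennreal ((h x)\<^sup>2) \<partial>(PiM {..<m} (\<lambda>_. P k i))) < ennreal M"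
    and A2: "\<exists>C>0. \<forall>k. n0 k \<ge> 2 * m \<and>
               (\<forall>i\<in>{1..k}. \<exists>c::real. real (n k i) = c * real (n0 k) \<and> 1 \<le> c \<and> c \<le> C)"
  shows "\<exists>M>0. \<forall>k. \<forall>i\<in>{1..k}. (real (n0 k))\<^sup>2 * \<bar>Xi3 (P k i) m h (n k i)\<bar> \<le> M"
proof -
  obtain M where M: "M > 0" and moment: "\<And>k i. i \<in> {1..k} \<Longrightarrow>
      (\<integral>\<^sup>+ x. ennreal ((h x)\<^sup>2) \<partial>(PiM {..<m} (\<lambda>_. P k i))) \<le> ennreal M"
    using A1 less_imp_le by metis
  obtain C where sizes: "\<forall>k. n0 k \<ge> 2 * m \<and>
      (\<forall>i\<in>{1..k}. \<exists>c::real. real (n k i) = c * real (n0 k) \<and> 1 \<le> c \<and> c \<le> C)"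
    using A2 by blast
  have n0: "n0 k \<le> n k i" if i: "i \<in> {1..k}" for k i
  proof -
    obtain c :: real where "real (n k i) = c * real (n0 k)" and "1 \<le> c"
      using sizes i by blast
    then show ?thesis using mult_right_mono[of 1 c "real (n0 k)"] by simp
  qed
  define B where "B = 2 ^ (m + 2) * (2 * real m) ^ (2 * m) * (2 * (4 * M) + 2 * (4 * M)\<^sup>2)"
  have "0 < B"
    unfolding B_def using M m by (intro mult_pos_pos zero_less_power add_pos_pos) auto
  moreover have "(real (n0 k))\<^sup>2 * \<bar>Xi3 (P k i) m h (n k i)\<bar> \<le> B" if i: "i \<in> {1..k}" for k i
  proof -
    have Q: "prob_space (P k i)" and n: "2 * m \<le> n k i" and sets: "sets (P k i) = sets E"
      using A0[OF i] by auto
    show ?thesis unfolding B_def using M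
      by (intro abs_Xi3_le[OF n n0[OF i]]
          abs_zeta3_le[OF Q sym_kernel_borel_measurable[OF kernel sets] moment[OF i]]) auto
  qed
  ultimately show ?thesis by blast
qed

end
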